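(* Fix $t,x$. Let $H(t,x,\cdot):\mathbb{R}^N\to\mathbb{R}$ be real-valued and convex, let $U(t)$ be a nonempty subset of $\mathbb{R}^M$, let $f(t,x,\cdot):\mathbb{R}^M\to\mathbb{R}^N$ be such that $f(t,x,U(t))$ is closed and convex, and let $l(t,x,\cdot):\mathbb{R}^M\to\mathbb{R}$. If $H(t,x,p)=\sup_{u\in U(t)}\{\langle p,f(t,x,u)\rangle-l(t,x,u)\}$ for all $p\in\mathbb{R}^N$, then $$\mathrm{dom}\,H^*(t,x,\cdot)=f(t,x,U(t)).$$
   Context: $H^*(t,x,v)=\sup_{p\in\mathbb{R}^N}\{\langle v,p\rangle-H(t,x,p)\}\in\mathbb{R}\cup\{+\infty\}$ is the Legendre–Fenchel conjugate in the last variable, and $\mathrm{dom}\,H^*(t,x,\cdot)=\{v\in\mathbb{R}^N:H^*(t,x,v)<+\infty\}$. *)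

theory Defs
  imports "HOL-Analysis.Analysis"
begin

definition legendre_conj :: "('a::real_inner \<Rightarrow> real) \<Rightarrow> 'a \<Rightarrow> ereal" where
  "legendre_conj h v = (SUP p. ereal (inner v p - h p))"

definition conj_dom :: "('a::real_inner \<Rightarrow> real) \<Rightarrow> 'a set" where
  "conj_dom h = {v. legendre_conj h v < \<infinity>}"

end

theory Submission
  imports Defs
begin

text \<open>If \<open>h p = sup\<^sub>i (\<langle>p, g i\<rangle> - c i)\<close>, then \<open>h\<^sup>*(g i) \<le> c i\<close>, so every \<open>g i\<close> lies in the
  domain of the conjugate.\<close>

lemma conj_dom_iff_bounded:
  "v \<in> conj_dom h \<longleftrightarrow> (\<exists>C. \<forall>p. inner v p - h p \<le> C)"
proof
  assume "v \<in> conj_dom h"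
  then have conj_finite: "legendre_conj h v < \<infinity>"
    unfolding conj_dom_def by simp
  have term_le: "ereal (inner v p - h p) \<le> legendre_conj h v" for p
    unfolding legendre_conj_def by (rule SUP_upper) simp
  from conj_finite term_le[of 0] obtain C where C: "legendre_conj h v = ereal C"
    by (cases "legendre_conj h v") auto
  have "inner v p - h p \<le> C" for p
    using term_le[of p] by (simp add: C)
  then show "\<exists>C. \<forall>p. inner v p - h p \<le> C" by blast
next
  assume "\<exists>C. \<forall>p. inner v p - h p \<le> C"
  then obtain C where "\<And>p. inner v p - h p \<le> C" by blast
  then have "legendre_conj h v \<le> ereal C"
    unfolding legendre_conj_def by (intro SUP_least) simp
  then have "legendre_conj h v < \<infinity>"
    by (rule order.strict_trans1) simp
  then show "v \<in> conj_dom h"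
    unfolding conj_dom_def by simp
qed

lemma sup_repr_upper:
  assumes repr: "\<And>p. ereal (h p) = (SUP i\<in>I. ereal (inner p (g i) - c i))"
    and "i \<in> I"
  shows "inner p (g i) - c i \<le> h p"
proof -
  have "ereal (inner p (g i) - c i) \<le> (SUP i\<in>I. ereal (inner p (g i) - c i))"
    using \<open>i \<in> I\<close> by (rule SUP_upper)
  then show ?thesis by (simp add: repr[symmetric])
qed

lemma sup_repr_least:
  assumes repr: "\<And>p. ereal (h p) = (SUP i\<in>I. ereal (inner p (g i) - c i))"
    and bound: "\<And>i. i \<in> I \<Longrightarrow> inner p (g i) - c i \<le> C"
  shows "h p \<le> C"
proof -
  have "(SUP i\<in>I. ereal (inner p (g i) - c i)) \<le> ereal C"
    using bound by (intro SUP_least) simp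
  then show ?thesis by (simp add: repr[symmetric])
qed

lemma image_subset_conj_dom:
  assumes repr: "\<And>p. ereal (h p) = (SUP i\<in>I. ereal (inner p (g i) - c i))"
  shows "g ` I \<subseteq> conj_dom h"
proof
  fix v assume "v \<in> g ` I"
  then obtain i where "i \<in> I" "v = g i" by blast
  then have "inner v p - h p \<le> c i" for p
    using sup_repr_upper[OF repr \<open>i \<in> I\<close>, of p] by (simp add: inner_commute)
  then show "v \<in> conj_dom h"
    unfolding conj_dom_iff_bounded by blast
qed

lemma sup_repr_halfspace_bound:
  assumes repr: "\<And>p. ereal (h p) = (SUP i\<in>I. ereal (inner p (g i) - c i))"
    and halfspace: "\<And>i. i \<in> I \<Longrightarrow> b \<le> inner a (g i)"
    and "s \<ge> 0"
  shows "h (- s *\<^sub>R a) \<le> h 0 - s * b"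
proof (rule sup_repr_least[OF repr])
  fix i assume "i \<in> I"
  have "s * b \<le> s * inner a (g i)"
    using halfspace[OF \<open>i \<in> I\<close>] \<open>s \<ge> 0\<close> by (rule mult_left_mono)
  moreover have "- c i \<le> h 0"
    using sup_repr_upper[OF repr \<open>i \<in> I\<close>, of 0] by simp
  ultimately show "inner (- s *\<^sub>R a) (g i) - c i \<le> h 0 - s * b"
    by simp
qed

lemma conj_dom_subset_closed_convex_image:
  fixes g :: "'b \<Rightarrow> 'a::{real_inner,heine_borel}"
  assumes repr: "\<And>p. ereal (h p) = (SUP i\<in>I. ereal (inner p (g i) - c i))"
    and "closed (g ` I)" and "convex (g ` I)"
  shows "conj_dom h \<subseteq> g ` I"
proof
  fix v assume "v \<in> conj_dom h"
  then obtain C where C: "\<And>p. inner v p - h p \<le> C"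
    unfolding conj_dom_iff_bounded by blast
  show "v \<in> g ` I"
  proof (rule ccontr)
    assume "v \<notin> g ` I"
    with separating_hyperplane_closed_point[OF \<open>convex (g ` I)\<close> \<open>closed (g ` I)\<close>]
    obtain a b where "inner a v < b" and sep: "\<And>i. i \<in> I \<Longrightarrow> b < inner a (g i)"
      by blast
    define d where "d = b - inner a v"
    define s where "s = (\<bar>C\<bar> + \<bar>h 0\<bar> + 1) / d"
    have "d > 0" using \<open>inner a v < b\<close> by (simp add: d_def)
    then have "s \<ge> 0" and sd: "s * d = \<bar>C\<bar> + \<bar>h 0\<bar> + 1"
      by (simp_all add: s_def)
    have "h (- s *\<^sub>R a) \<le> h 0 - s * b"
      using sup_repr_halfspace_bound[OF repr _ \<open>s \<ge> 0\<close>] sep less_imp_le by blast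
    moreover have "inner v (- s *\<^sub>R a) = - s * inner a v"
      by (simp add: inner_commute)
    moreover have "s * d = s * b - s * inner a v"
      by (simp add: d_def right_diff_distrib)
    ultimately have "s * d - h 0 \<le> C"
      using C[of "- s *\<^sub>R a"] by linarith
    with sd show False by linarith
  qed
qed

lemma conj_dom_sup_repr:
  fixes g :: "'b \<Rightarrow> 'a::{real_inner,heine_borel}"
  assumes "\<And>p. ereal (h p) = (SUP i\<in>I. ereal (inner p (g i) - c i))"
    and "closed (g ` I)" "convex (g ` I)"
  shows "conj_dom h = g ` I"
  using conj_dom_subset_closed_convex_image[OF assms] image_subset_conj_dom[OF assms(1)]
  by (rule subset_antisym)

theorem lemma3p2:
  fixes H :: "real \<Rightarrow> real^'n \<Rightarrow> real^'n \<Rightarrow> real"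
    and U :: "real \<Rightarrow> (real^'m) set"
    and f :: "real \<Rightarrow> real^'n \<Rightarrow> real^'m \<Rightarrow> real^'n"
    and l :: "real \<Rightarrow> real^'n \<Rightarrow> real^'m \<Rightarrow> real"
    and t :: real and x :: "real^'n"
  assumes "convex_on UNIV (H t x)"
    and "U t \<noteq> {}"
    and "closed (f t x ` U t)"
    and "convex (f t x ` U t)"
    and "\<And>p. ereal (H t x p) = (SUP u\<in>U t. ereal (inner p (f t x u) - l t x u))"
  shows "conj_dom (H t x) = f t x ` U t"
  using conj_dom_sup_repr[OF assms(5,3,4)] .

end
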